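(* Let $G$ be a finite abelian group and $A$ a finite dimensional $G$-graded algebra with a regular grading with bicharacter $\beta$ whose regular decomposition is minimal, and assume $A_0$ is a local algebra. If $J(A_0)\neq0$, then there exist a commutative local subalgebra $\mathscr{U}$ of $A$ (namely $\mathscr U=K+J(A_0)$) and a 2-cocycle $\alpha\in H^2(G,K^* )$ inducing $\beta$ such that $A\cong K^\alpha G\otimes\mathscr{U}$ as $G$-graded algebras, where $\mathscr U$ carries the trivial grading. If $J(A_0)=0$, then $A\cong K^\alpha G$ as $G$-graded algebras.
   Context: All algebras are associative with unit over an algebraically closed field $K$ of characteristic $0$; $G$ finite abelian, written additively, neutral element $0$. A $G$-graded algebra $A$ has a regular grading if (i) for every $n$ and every $(g_1,\dots,g_n)\in G^n$ there exist $a_i\in A_{g_i}$ with $a_1\cdots a_n\ne0$, and (ii) there is $\beta\colon G\times G\to K^*$ with $a_ga_h=\beta(g,h)a_ha_g$ for all homogeneous $a_g,a_h$ ($\beta$ = bicharacter). The regular decomposition is minimal if there do not exist $g\neq h$ with $\beta(x,g)=\beta(x,h)$ for all $x\in G$. A commutative algebra $S$ is local if $S/J(S)\cong K$, $J$ the Jacobson radical. For a 2-cocycle $\alpha$, $K^\alpha G$ has basis $\{X_g\}$ with $X_gX_h=\alpha(g,h)X_{g+h}$, graded by $(K^\alpha G)_g=KX_g$; $\alpha$ induces $\beta$ if $\beta(g,h)=\alpha(g,h)\alpha(h,g)^{-1}$. Trivial grading: $V_0=V$, $V_g=0$ for $g\ne0$; tensor products are graded by $(V\otimes W)_g=\bigoplus_{h+k=g}V_h\otimes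 W_k$. *)

theory Defs
  imports "HOL-Computational_Algebra.Polynomial"
begin

definition alg_closed :: "'k::field itself \<Rightarrow> bool" where
  "alg_closed TYPE('k) \<longleftrightarrow>
     (\<forall>p :: 'k poly. degree p \<ge> 1 \<longrightarrow> (\<exists>x. poly p x = 0))"

(* ---------- finite dimensional associative unital K-algebras ----------
   The algebra A is the whole type 'a (a ring with 1) together with a
   scalar multiplication  scale :: 'k \<Rightarrow> 'a \<Rightarrow> 'a  making it a K-algebra. *)

definition is_algebra :: "('k::field \<Rightarrow> 'a::ring_1 \<Rightarrow> 'a) \<Rightarrow> bool" where
  "is_algebra scale \<longleftrightarrow> vector_space scale \<and>
     (\<forall>c x y. scale c (x * y) = scale c x * y \<and> scale c (x * y) = x * scale c y)"

definition fin_dim_algebra :: "('k::field \<Rightarrow> 'a::ring_1 \<Rightarrow> 'a) \<Rightarrow> bool" where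
  "fin_dim_algebra scale \<longleftrightarrow> is_algebra scale \<and>
     (\<exists>B. finite B \<and> module.span scale B = UNIV)"

definition subalgebra :: "('k::field \<Rightarrow> 'a::ring_1 \<Rightarrow> 'a) \<Rightarrow> 'a set \<Rightarrow> bool" where
  "subalgebra scale S \<longleftrightarrow> module.subspace scale S \<and> 1 \<in> S \<and>
     (\<forall>x\<in>S. \<forall>y\<in>S. x * y \<in> S)"

definition commutative_set :: "'a::ring_1 set \<Rightarrow> bool" where
  "commutative_set S \<longleftrightarrow> (\<forall>x\<in>S. \<forall>y\<in>S. x * y = y * x)"

definition left_ideal_in :: "'a::ring_1 set \<Rightarrow> 'a set \<Rightarrow> bool" where
  "left_ideal_in S I \<longleftrightarrow> I \<subseteq> S \<and> 0 \<in> I \<and>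
     (\<forall>x\<in>I. \<forall>y\<in>I. x + y \<in> I) \<and> (\<forall>x\<in>I. - x \<in> I) \<and>
     (\<forall>s\<in>S. \<forall>x\<in>I. s * x \<in> I)"

definition maximal_left_ideal_in :: "'a::ring_1 set \<Rightarrow> 'a set \<Rightarrow> bool" where
  "maximal_left_ideal_in S I \<longleftrightarrow> left_ideal_in S I \<and> I \<noteq> S \<and>
     (\<forall>I'. left_ideal_in S I' \<and> I \<subseteq> I' \<longrightarrow> I' = I \<or> I' = S)"

definition jacobson :: "'a::ring_1 set \<Rightarrow> 'a set" where
  "jacobson S = S \<inter> \<Inter> {I. maximal_left_ideal_in S I}"

(* S local:  S / J(S) \<cong> K as K-algebras, i.e. (first isomorphism theorem)
   there is a surjective unital K-algebra homomorphism S \<rightarrow> K with kernel J(S). *)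
definition local_alg :: "('k::field \<Rightarrow> 'a::ring_1 \<Rightarrow> 'a) \<Rightarrow> 'a set \<Rightarrow> bool" where
  "local_alg scale S \<longleftrightarrow> (\<exists>\<psi> :: 'a \<Rightarrow> 'k.
     \<psi> ` S = UNIV \<and> \<psi> 1 = 1 \<and>
     (\<forall>x\<in>S. \<forall>y\<in>S. \<psi> (x + y) = \<psi> x + \<psi> y \<and> \<psi> (x * y) = \<psi> x * \<psi> y) \<and>
     (\<forall>c. \<forall>x\<in>S. \<psi> (scale c x) = c * \<psi> x) \<and>
     {x\<in>S. \<psi> x = 0} = jacobson S)"

definition graded_algebra ::
  "('k::field \<Rightarrow> 'a::ring_1 \<Rightarrow> 'a) \<Rightarrow> ('g::{finite,ab_group_add} \<Rightarrow> 'a set) \<Rightarrow> bool" where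
  "graded_algebra scale V \<longleftrightarrow> is_algebra scale \<and>
     (\<forall>g. module.subspace scale (V g)) \<and>
     (\<forall>a. \<exists>!c :: 'g \<Rightarrow> 'a. (\<forall>g. c g \<in> V g) \<and> a = (\<Sum>g\<in>UNIV. c g)) \<and>
     (\<forall>g h. \<forall>x\<in>V g. \<forall>y\<in>V h. x * y \<in> V (g + h))"

definition regular_grading ::
  "('k::field \<Rightarrow> 'a::ring_1 \<Rightarrow> 'a) \<Rightarrow> ('g::{finite,ab_group_add} \<Rightarrow> 'a set)
     \<Rightarrow> ('g \<Rightarrow> 'g \<Rightarrow> 'k) \<Rightarrow> bool" where
  "regular_grading scale V \<beta> \<longleftrightarrow> graded_algebra scale V \<and>
     (\<forall>gs :: 'g list. gs \<noteq> [] \<longrightarrow> (\<exists>as :: 'a list. length as = length gs \<and>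
         (\<forall>i<length gs. as ! i \<in> V (gs ! i)) \<and> prod_list as \<noteq> 0)) \<and>
     (\<forall>g h. \<beta> g h \<noteq> 0) \<and>
     (\<forall>g h. \<forall>x\<in>V g. \<forall>y\<in>V h. x * y = scale (\<beta> g h) (y * x))"

definition minimal_decomposition :: "('g \<Rightarrow> 'g \<Rightarrow> 'k) \<Rightarrow> bool" where
  "minimal_decomposition \<beta> \<longleftrightarrow> \<not> (\<exists>g h. g \<noteq> h \<and> (\<forall>x. \<beta> x g = \<beta> x h))"

definition two_cocycle :: "('g::ab_group_add \<Rightarrow> 'g \<Rightarrow> 'k::field) \<Rightarrow> bool" where
  "two_cocycle \<alpha> \<longleftrightarrow> (\<forall>g h. \<alpha> g h \<noteq> 0) \<and>
     (\<forall>g h k. \<alpha> g h * \<alpha> (g + h) k = \<alpha> h k * \<alpha> g (h + k))"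

definition induces :: "('g \<Rightarrow> 'g \<Rightarrow> 'k::field) \<Rightarrow> ('g \<Rightarrow> 'g \<Rightarrow> 'k) \<Rightarrow> bool" where
  "induces \<alpha> \<beta> \<longleftrightarrow> (\<forall>g h. \<beta> g h = \<alpha> g h / \<alpha> h g)"

(* ---------- twisted group algebra K^\<alpha>G ----------
   An element  \<Sum>_g f(g) X_g  is represented by its coefficient function f :: 'g \<Rightarrow> 'k;
   X_g X_h = \<alpha>(g,h) X_{g+h}.  Its unit is \<alpha>(0,0)^{-1} X_0.  (K^\<alpha>G)_g = K X_g. *)

definition tga_mult :: "('g::{finite,ab_group_add} \<Rightarrow> 'g \<Rightarrow> 'k::field)
     \<Rightarrow> ('g \<Rightarrow> 'k) \<Rightarrow> ('g \<Rightarrow> 'k) \<Rightarrow> ('g \<Rightarrow> 'k)" where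
  "tga_mult \<alpha> f f' = (\<lambda>k. \<Sum>g\<in>UNIV. \<alpha> g (k - g) * f g * f' (k - g))"

definition tga_one :: "('g::ab_group_add \<Rightarrow> 'g \<Rightarrow> 'k::field) \<Rightarrow> ('g \<Rightarrow> 'k)" where
  "tga_one \<alpha> = (\<lambda>g. if g = 0 then inverse (\<alpha> 0 0) else 0)"

definition graded_iso_tga ::
  "('k::field \<Rightarrow> 'a::ring_1 \<Rightarrow> 'a) \<Rightarrow> ('g::{finite,ab_group_add} \<Rightarrow> 'a set)
     \<Rightarrow> ('g \<Rightarrow> 'g \<Rightarrow> 'k) \<Rightarrow> (('g \<Rightarrow> 'k) \<Rightarrow> 'a) \<Rightarrow> bool" where
  "graded_iso_tga scale V \<alpha> \<phi> \<longleftrightarrow> bij \<phi> \<and>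
     (\<forall>f f'. \<phi> (\<lambda>g. f g + f' g) = \<phi> f + \<phi> f') \<and>
     (\<forall>c f. \<phi> (\<lambda>g. c * f g) = scale c (\<phi> f)) \<and>
     (\<forall>f f'. \<phi> (tga_mult \<alpha> f f') = \<phi> f * \<phi> f') \<and>
     \<phi> (tga_one \<alpha>) = 1 \<and>
     (\<forall>g. \<phi> ` {f. \<forall>h. h \<noteq> g \<longrightarrow> f h = 0} = V g)"

(* ---------- K^\<alpha>G \<otimes> U  for a subalgebra U \<subseteq> A with the trivial grading ----------
   Since {X_g} is a basis of K^\<alpha>G, every element of K^\<alpha>G \<otimes> U is uniquely
   \<Sum>_g X_g \<otimes> u_g; it is represented by u :: 'g \<Rightarrow> 'a with all u g \<in> U.
   (X_g \<otimes> u)(X_h \<otimes> v) = \<alpha>(g,h) X_{g+h} \<otimes> uv, unit \<alpha>(0,0)^{-1} X_0 \<otimes> 1,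
   and (K^\<alpha>G \<otimes> U)_g = X_g \<otimes> U  (because U is concentrated in degree 0). *)

definition tt_carrier :: "'a set \<Rightarrow> ('g \<Rightarrow> 'a) set" where
  "tt_carrier U = {u. \<forall>g. u g \<in> U}"

definition tt_mult :: "('k::field \<Rightarrow> 'a::ring_1 \<Rightarrow> 'a)
     \<Rightarrow> ('g::{finite,ab_group_add} \<Rightarrow> 'g \<Rightarrow> 'k) \<Rightarrow> ('g \<Rightarrow> 'a) \<Rightarrow> ('g \<Rightarrow> 'a) \<Rightarrow> ('g \<Rightarrow> 'a)" where
  "tt_mult scale \<alpha> u v = (\<lambda>k. \<Sum>g\<in>UNIV. scale (\<alpha> g (k - g)) (u g * v (k - g)))"

definition tt_one :: "('k::field \<Rightarrow> 'a::ring_1 \<Rightarrow> 'a)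
     \<Rightarrow> ('g::ab_group_add \<Rightarrow> 'g \<Rightarrow> 'k) \<Rightarrow> ('g \<Rightarrow> 'a)" where
  "tt_one scale \<alpha> = (\<lambda>g. if g = 0 then scale (inverse (\<alpha> 0 0)) 1 else 0)"

definition graded_iso_tt ::
  "('k::field \<Rightarrow> 'a::ring_1 \<Rightarrow> 'a) \<Rightarrow> ('g::{finite,ab_group_add} \<Rightarrow> 'a set)
     \<Rightarrow> ('g \<Rightarrow> 'g \<Rightarrow> 'k) \<Rightarrow> 'a set \<Rightarrow> (('g \<Rightarrow> 'a) \<Rightarrow> 'a) \<Rightarrow> bool" where
  "graded_iso_tt scale V \<alpha> U \<phi> \<longleftrightarrow> bij_betw \<phi> (tt_carrier U) UNIV \<and>
     (\<forall>u\<in>tt_carrier U. \<forall>v\<in>tt_carrier U. \<phi> (\<lambda>g. u g + v g) = \<phi> u + \<phi> v) \<and>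
     (\<forall>c. \<forall>u\<in>tt_carrier U. \<phi> (\<lambda>g. scale c (u g)) = scale c (\<phi> u)) \<and>
     (\<forall>u\<in>tt_carrier U. \<forall>v\<in>tt_carrier U. \<phi> (tt_mult scale \<alpha> u v) = \<phi> u * \<phi> v) \<and>
     \<phi> (tt_one scale \<alpha>) = 1 \<and>
     (\<forall>g. \<phi> ` {u\<in>tt_carrier U. \<forall>h. h \<noteq> g \<longrightarrow> u h = 0} = V g)"

end

(* The degree-zero part A_0 = V 0 is central (beta(g, 0) = 1) and local, so every element of A_0
   outside its radical J is invertible, and J is nilpotent because A is finite dimensional.
   Regularity applied to the word g, -g, g, -g, ... then yields a homogeneous unit u_g in every
   A_g. These units multiply up to a 2-cocycle with values in the units of A_0; dividing by its
   residue psi leaves a cocycle in the group 1 + J of principal units, which is abelian and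
   uniquely |G|-divisible (binomial series, characteristic 0), hence a coboundary. Rescaling the
   u_g gives homogeneous units w_g with w_g w_h = alpha(g, h) w_(g+h) for a scalar cocycle alpha,
   and A = (sum of the w_g A_0) is then K^alpha G tensor A_0, where A_0 = K + J. *)

theory Submission
  imports Defs "HOL-Algebra.FiniteProduct" "HOL-Computational_Algebra.Polynomial_FPS"
begin

lemma sum_sum_as_convolution:
  fixes F :: "'g::{finite,ab_group_add} \<Rightarrow> 'g \<Rightarrow> 'b::comm_monoid_add"
  shows "(\<Sum>g\<in>UNIV. \<Sum>h\<in>UNIV. F g h) = (\<Sum>k\<in>UNIV. \<Sum>g\<in>UNIV. F g (k - g))"
proof -
  have "(\<Sum>h\<in>UNIV. F g h) = (\<Sum>k\<in>UNIV. F g (k - g))" for g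
    by (rule sum.reindex_bij_witness[of _ "\<lambda>k. k - g" "\<lambda>h. g + h"]) auto
  then have "(\<Sum>g\<in>UNIV. \<Sum>h\<in>UNIV. F g h) = (\<Sum>g\<in>UNIV. \<Sum>k\<in>UNIV. F g (k - g))"
    by simp
  also have "\<dots> = (\<Sum>k\<in>UNIV. \<Sum>g\<in>UNIV. F g (k - g))"
    by (rule sum.swap)
  finally show ?thesis .
qed

lemma coeff_truncate_fps_power:
  assumes "i < N"
  shows "coeff (truncate_fps N F ^ m) i = fps_nth (F ^ m) i"
  using assms
proof (induction m arbitrary: i)
  case (Suc m)
  have "coeff (truncate_fps N F ^ Suc m) i = fps_nth (fps_cutoff N F * fps_of_poly (truncate_fps N F ^ m)) i"
    by (simp only: power_Suc fps_of_poly_nth[symmetric] fps_of_poly_mult fps_of_poly_truncate)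
  also have "\<dots> = (\<Sum>j=0..i. fps_nth F j * coeff (truncate_fps N F ^ m) (i - j))"
    using Suc.prems by (simp add: fps_cutoff_left_mult_nth fps_mult_nth)
  also have "\<dots> = fps_nth (F ^ Suc m) i"
    using Suc by (simp add: fps_mult_nth)
  finally show ?case .
qed simp

lemma prod_list_take_split:
  "k \<le> i \<Longrightarrow> prod_list (take i xs) = prod_list (take k xs) * prod_list (drop k (take i xs))"
  using append_take_drop_id[of k "take i xs"] by (metis min.absorb1 prod_list.append take_take)

lemma prod_list_as_pair_products:
  fixes as :: "'a::monoid_mult list"
  assumes "length as = 2 * n" "\<forall>i<2 * n. as ! i \<in> (if even i then P else Q)"
  shows "\<exists>rs. length rs = n \<and> (\<forall>r\<in>set rs. \<exists>a\<in>P. \<exists>b\<in>Q. r = a * b) \<and> prod_list rs = prod_list as"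
  using assms
proof (induction n arbitrary: as)
  case (Suc n)
  then obtain a b as' where as: "as = a # b # as'"
    by (cases as; cases "tl as") auto
  have "\<forall>i<2 * n. as' ! i \<in> (if even i then P else Q)"
  proof (intro allI impI)
    fix i assume "i < 2 * n"
    then show "as' ! i \<in> (if even i then P else Q)"
      using Suc.prems(2)[rule_format, of "Suc (Suc i)"] as by simp
  qed
  with Suc.IH[of as'] Suc.prems(1) as obtain rs where
    rs: "length rs = n" "\<forall>r\<in>set rs. \<exists>a\<in>P. \<exists>b\<in>Q. r = a * b" "prod_list rs = prod_list as'"
    by auto
  have "a \<in> P" "b \<in> Q"
    using Suc.prems(2)[rule_format, of 0] Suc.prems(2)[rule_format, of 1] as by auto
  with rs as show ?case by (intro exI[of _ "a * b # rs"]) (auto simp: mult.assoc)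
qed simp

lemma (in vector_space) nontrivial_relation_if_card_le:
  assumes "finite B" "span B = UNIV" "card B \<le> L"
  shows "\<exists>c. (\<exists>j\<le>L. c j \<noteq> 0) \<and> (\<Sum>j\<le>L. scale (c j) (q j)) = 0"
proof (cases "inj_on q {..L}")
  case False
  then obtain i j where ij: "i \<le> L" "j \<le> L" "i \<noteq> j" "q i = q j"
    by (auto simp: inj_on_def)
  define c :: "nat \<Rightarrow> 'a" where "c t = (if t = i then 1 else if t = j then -1 else 0)" for t
  have "(\<Sum>t\<le>L. scale (c t) (q t)) = (\<Sum>t\<le>L. (if t = i then q i else 0) + (if t = j then - q j else 0))"
    by (rule sum.cong) (auto simp: c_def ij(3))
  also have "\<dots> = 0" using ij by (simp add: sum.distrib)
  finally show ?thesis using ij by (intro exI[of _ c]) (auto simp: c_def)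
next
  case True
  have "dependent (q ` {..L})"
  proof (rule ccontr)
    assume "independent (q ` {..L})"
    then have "card (q ` {..L}) \<le> card B" using independent_span_bound assms by auto
    then show False using True assms(3) by (simp add: card_image)
  qed
  then obtain u where u: "\<exists>v\<in>q ` {..L}. u v \<noteq> 0" "(\<Sum>v\<in>q ` {..L}. scale (u v) v) = 0"
    using dependent_finite by blast
  then show ?thesis
    by (intro exI[of _ "u \<circ> q"]) (auto simp: sum.reindex[OF True])
qed

lemma left_ideal_in_Union_chain:
  assumes "C \<noteq> {}" "\<And>I. I \<in> C \<Longrightarrow> left_ideal_in S I" "\<And>I I'. I \<in> C \<Longrightarrow> I' \<in> C \<Longrightarrow> I \<subseteq> I' \<or> I' \<subseteq> I"
  shows "left_ideal_in S (\<Union>C)"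
  unfolding left_ideal_in_def
proof (intro conjI ballI)
  show "\<Union>C \<subseteq> S" using assms(2) unfolding left_ideal_in_def by blast
  show "0 \<in> \<Union>C" using assms(1,2) by (auto simp: left_ideal_in_def)
  show "x + y \<in> \<Union>C" if xy: "x \<in> \<Union>C" "y \<in> \<Union>C" for x y
  proof -
    obtain I I' where "I \<in> C" "I' \<in> C" "x \<in> I" "y \<in> I'" using xy by auto
    with assms(2) assms(3)[of I I'] show ?thesis unfolding left_ideal_in_def by blast
  qed
  show "- x \<in> \<Union>C" if "x \<in> \<Union>C" for x
    using that assms(2) by (auto simp: left_ideal_in_def)
  show "s * x \<in> \<Union>C" if "s \<in> S" "x \<in> \<Union>C" for s x
    using that assms(2) unfolding left_ideal_in_def by blast
qed

lemma maximal_left_ideal_in_extension: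
  assumes "1 \<in> S" "left_ideal_in S I" "1 \<notin> I"
  shows "\<exists>M. maximal_left_ideal_in S M \<and> I \<subseteq> M"
proof -
  define F where "F = {I'. left_ideal_in S I' \<and> I \<subseteq> I' \<and> 1 \<notin> I'}"
  have "\<exists>M\<in>F. \<forall>X\<in>F. M \<subseteq> X \<longrightarrow> X = M"
  proof (rule Zorn_Lemma2, intro ballI)
    fix C assume C: "C \<in> chains F"
    show "\<exists>U\<in>F. \<forall>X\<in>C. X \<subseteq> U"
    proof (cases "C = {}")
      case True then show ?thesis using assms by (auto simp: F_def)
    next
      case False
      with C have "\<Union>C \<in> F"
        by (auto simp: F_def chains_def chain_subset_def intro!: left_ideal_in_Union_chain)
      then show ?thesis by auto
    qed
  qed
  then obtain M where M: "M \<in> F" "\<And>X. X \<in> F \<Longrightarrow> M \<subseteq> X \<Longrightarrow> X = M" by blast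
  have "maximal_left_ideal_in S M"
    unfolding maximal_left_ideal_in_def
  proof (intro conjI allI impI)
    show "left_ideal_in S M" "M \<noteq> S" using M(1) assms(1) by (auto simp: F_def)
    fix I' assume I': "left_ideal_in S I' \<and> M \<subseteq> I'"
    show "I' = M \<or> I' = S"
    proof (cases "1 \<in> I'")
      case True
      then have "S \<subseteq> I'" using I' by (force simp: left_ideal_in_def)
      then show ?thesis using I' by (auto simp: left_ideal_in_def)
    next
      case False
      then show ?thesis using I' M by (auto simp: F_def)
    qed
  qed
  then show ?thesis using M(1) by (auto simp: F_def)
qed

lemma (in comm_group) nat_pow_eq_imp_eq_if_torsion_free:
  fixes n :: nat
  assumes "\<And>z. z \<in> carrier G \<Longrightarrow> z [^] n = \<one> \<Longrightarrow> z = \<one>"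
    and "x \<in> carrier G" "y \<in> carrier G" "x [^] n = y [^] n"
  shows "x = y"
proof -
  have "(x \<otimes> inv y) [^] n = \<one>"
    using assms(2-4) by (simp add: nat_pow_distrib nat_pow_inv)
  then have "x \<otimes> inv y = \<one>" using assms(1-3) by simp
  then show ?thesis using assms(2,3) by (metis inv_closed inv_equality inv_inv r_inv)
qed

lemma (in comm_group) cocycle_finprod_identity:
  fixes d :: "'g::{finite,ab_group_add} \<Rightarrow> 'g \<Rightarrow> 'a"
  assumes d_closed: "\<And>g h. d g h \<in> carrier G"
    and cocycle: "\<And>g h k. d g h \<otimes> d (g + h) k = d h k \<otimes> d g (h + k)"
  shows "d g h [^] card (UNIV :: 'g set) \<otimes> finprod G (d (g + h)) UNIV = finprod G (d h) UNIV \<otimes> finprod G (d g) UNIV"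
proof -
  have d_Pi: "d g \<in> UNIV \<rightarrow> carrier G" for g using d_closed by auto
  have "d g h [^] card (UNIV :: 'g set) \<otimes> finprod G (d (g + h)) UNIV = (\<Otimes>k\<in>UNIV. d g h \<otimes> d (g + h) k)"
    by (simp add: finprod_const d_closed d_Pi Pi_def)
  also have "\<dots> = (\<Otimes>k\<in>UNIV. d h k \<otimes> d g (h + k))"
    by (intro finprod_cong') (auto simp: cocycle d_closed)
  also have "\<dots> = finprod G (d h) UNIV \<otimes> (\<Otimes>k\<in>UNIV. d g (h + k))"
    by (simp add: d_Pi Pi_def d_closed)
  also have "(\<Otimes>k\<in>UNIV. d g (h + k)) = (\<Otimes>k\<in>(\<lambda>k. h + k) ` UNIV. d g k)"
    by (rule finprod_reindex[symmetric]) (auto simp: d_closed inj_on_def)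
  also have "(\<lambda>k. h + k) ` UNIV = (UNIV :: 'g set)"
    by (metis surj_def add.commute diff_add_cancel)
  finally show ?thesis .
qed

text \<open>The averages \<open>t g = \<Prod>\<^sub>k d g k\<close> turn \<open>d\<close> into a coboundary up to the \<open>|G|\<close>-th power;
  unique \<open>|G|\<close>-th roots remove the power.\<close>

lemma (in comm_group) cocycle_coboundary_if_uniquely_divisible:
  fixes d :: "'g::{finite,ab_group_add} \<Rightarrow> 'g \<Rightarrow> 'a"
  assumes d_closed: "\<And>g h. d g h \<in> carrier G"
    and cocycle: "\<And>g h k. d g h \<otimes> d (g + h) k = d h k \<otimes> d g (h + k)"
    and roots: "\<And>x. x \<in> carrier G \<Longrightarrow> \<exists>r\<in>carrier G. r [^] card (UNIV :: 'g set) = x"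
    and torsion_free: "\<And>x. x \<in> carrier G \<Longrightarrow> x [^] card (UNIV :: 'g set) = \<one> \<Longrightarrow> x = \<one>"
  shows "\<exists>t. (\<forall>g. t g \<in> carrier G) \<and> (\<forall>g h. d g h \<otimes> t g \<otimes> t h = t (g + h))"
proof -
  have average_closed: "finprod G (d g) UNIV \<in> carrier G" for g
    using d_closed by (simp add: Pi_def)
  obtain s where s: "\<And>g. s g \<in> carrier G" "\<And>g. s g [^] card (UNIV :: 'g set) = finprod G (d g) UNIV"
    using roots[OF average_closed] by metis
  have s_coboundary: "d g h \<otimes> s (g + h) = s g \<otimes> s h" for g h
  proof (rule nat_pow_eq_imp_eq_if_torsion_free[OF torsion_free])
    show "(d g h \<otimes> s (g + h)) [^] card (UNIV :: 'g set) = (s g \<otimes> s h) [^] card (UNIV :: 'g set)"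
      using cocycle_finprod_identity[OF d_closed cocycle, of g h]
      by (simp add: nat_pow_distrib d_closed s m_comm average_closed)
  qed (simp_all add: d_closed s)
  have "d g h \<otimes> inv (s g) \<otimes> inv (s h) = inv (s (g + h))" for g h
  proof -
    have "d g h \<otimes> inv (s g) \<otimes> inv (s h) = d g h \<otimes> inv (d g h \<otimes> s (g + h))"
      by (simp add: s_coboundary inv_mult m_assoc d_closed s)
    also have "\<dots> = inv (s (g + h))"
      by (simp add: inv_mult d_closed s flip: m_assoc)
    finally show ?thesis .
  qed
  then show ?thesis using s by (intro exI[of _ "\<lambda>g. inv (s g)"]) simp
qed

lemma geometric_sum_telescope:
  fixes x :: "'a::ring_1"
  shows "(x - 1) * (\<Sum>i<n. x ^ i) = x ^ n - 1"
proof (induction n)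
  case (Suc n)
  then have "(x - 1) * (\<Sum>i<Suc n. x ^ i) = (x ^ n - 1) + (x - 1) * x ^ n"
    by (simp add: distrib_left)
  also have "\<dots> = x ^ Suc n - 1"
    by (simp add: algebra_simps power_commutes)
  finally show ?case .
qed simp

section \<open>Polynomial evaluation in an algebra\<close>

locale k_algebra = vector_space scale for scale :: "'k::field \<Rightarrow> 'a::ring_1 \<Rightarrow> 'a" +
  assumes scale_mult_left: "scale c (x * y) = scale c x * y"
    and scale_mult_right: "scale c (x * y) = x * scale c y"
begin

lemma scale_one_mult: "scale c 1 * y = scale c y"
  using scale_mult_left[of c 1 y] by simp

definition aeval :: "'a \<Rightarrow> 'k poly \<Rightarrow> 'a" where
  "aeval x p = (\<Sum>i\<le>degree p. scale (coeff p i) (x ^ i))"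

lemma aeval_eq_sum_atMost: "degree p \<le> M \<Longrightarrow> aeval x p = (\<Sum>i\<le>M. scale (coeff p i) (x ^ i))"
  unfolding aeval_def by (rule sum.mono_neutral_left) (auto simp: coeff_eq_0)

lemma aeval_0 [simp]: "aeval x 0 = 0"
  by (simp add: aeval_def)

lemma aeval_1 [simp]: "aeval x 1 = 1"
  by (simp add: aeval_def)

lemma aeval_pCons: "aeval x (pCons a p) = scale a 1 + x * aeval x p"
proof -
  have "aeval x (pCons a p) = (\<Sum>i\<le>Suc (degree p). scale (coeff (pCons a p) i) (x ^ i))"
    by (rule aeval_eq_sum_atMost) (simp add: degree_pCons_le)
  also have "\<dots> = scale a 1 + (\<Sum>i\<le>degree p. scale (coeff p i) (x * x ^ i))"
    by (subst sum.atMost_Suc_shift) simp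
  also have "\<dots> = scale a 1 + x * aeval x p"
    by (simp add: aeval_def sum_distrib_left scale_mult_right)
  finally show ?thesis .
qed

lemma aeval_add: "aeval x (p + q) = aeval x p + aeval x q"
proof -
  define M where "M = max (degree p) (degree q)"
  have "aeval x (p + q) = (\<Sum>i\<le>M. scale (coeff (p + q) i) (x ^ i))"
    by (rule aeval_eq_sum_atMost) (simp add: M_def degree_add_le)
  also have "\<dots> = (\<Sum>i\<le>M. scale (coeff p i) (x ^ i)) + (\<Sum>i\<le>M. scale (coeff q i) (x ^ i))"
    by (simp add: scale_left_distrib sum.distrib)
  also have "\<dots> = aeval x p + aeval x q"
    by (simp add: aeval_eq_sum_atMost[symmetric] M_def)
  finally show ?thesis .
qed

lemma aeval_smult: "aeval x (smult c p) = scale c (aeval x p)"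
proof -
  have "aeval x (smult c p) = (\<Sum>i\<le>degree p. scale (coeff (smult c p) i) (x ^ i))"
    by (rule aeval_eq_sum_atMost) (simp add: degree_smult_le)
  then show ?thesis by (simp add: aeval_def scale_sum_right)
qed

lemma aeval_mult: "aeval x (p * q) = aeval x p * aeval x q"
proof (induction p rule: pCons_induct)
  case (pCons a p)
  have "aeval x (pCons a p * q) = scale a (aeval x q) + x * (aeval x p * aeval x q)"
    by (simp add: aeval_add aeval_smult aeval_pCons pCons.IH)
  also have "\<dots> = aeval x (pCons a p) * aeval x q"
    by (simp add: aeval_pCons distrib_right scale_one_mult mult.assoc)
  finally show ?case .
qed simp

lemma aeval_power: "aeval x (p ^ m) = aeval x p ^ m"
  by (induction m) (simp_all add: aeval_mult)

lemma aeval_nilpotent_cong: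
  assumes "\<And>i. i \<ge> N \<Longrightarrow> x ^ i = 0" and "\<And>i. i < N \<Longrightarrow> coeff p i = coeff q i"
  shows "aeval x p = aeval x q"
proof -
  define M where "M = max N (max (degree p) (degree q))"
  have "aeval x p = (\<Sum>i\<le>M. scale (coeff p i) (x ^ i))"
    by (rule aeval_eq_sum_atMost) (simp add: M_def)
  also have "\<dots> = (\<Sum>i\<le>M. scale (coeff q i) (x ^ i))"
    using assms by (intro sum.cong refl) (metis not_le scale_zero_right)
  also have "\<dots> = aeval x q"
    by (rule aeval_eq_sum_atMost[symmetric]) (simp add: M_def)
  finally show ?thesis .
qed

end

section \<open>Graded algebras and twisted group algebras\<close>

locale graded_k_algebra = k_algebra scale for scale :: "'k::field \<Rightarrow> 'a::ring_1 \<Rightarrow> 'a" +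
  fixes V :: "'g::{finite,ab_group_add} \<Rightarrow> 'a set"
  assumes subspace_V: "subspace (V g)"
    and unique_decomposition: "\<exists>!c. (\<forall>g. c g \<in> V g) \<and> a = (\<Sum>g\<in>UNIV. c g)"
    and V_mult: "x \<in> V g \<Longrightarrow> y \<in> V h \<Longrightarrow> x * y \<in> V (g + h)"
begin

lemma V_zero [simp]: "0 \<in> V g"
  using subspace_V subspace_0 by blast

lemma V_add: "x \<in> V g \<Longrightarrow> y \<in> V g \<Longrightarrow> x + y \<in> V g"
  using subspace_V subspace_add by blast

lemma V_scale: "x \<in> V g \<Longrightarrow> scale c x \<in> V g"
  using subspace_V subspace_scale by blast

lemma V_diff: "x \<in> V g \<Longrightarrow> y \<in> V g \<Longrightarrow> x - y \<in> V g"
  using subspace_V subspace_diff by blast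

lemma V_sum: "(\<And>i. i \<in> I \<Longrightarrow> f i \<in> V g) \<Longrightarrow> sum f I \<in> V g"
  using subspace_V subspace_sum by blast

lemma V0_mult: "x \<in> V 0 \<Longrightarrow> y \<in> V 0 \<Longrightarrow> x * y \<in> V 0"
  using V_mult[of x 0 y 0] by simp

definition component :: "'a \<Rightarrow> 'g \<Rightarrow> 'a" where
  "component a = (THE c. (\<forall>g. c g \<in> V g) \<and> a = (\<Sum>g\<in>UNIV. c g))"

lemma component_in_V: "component a g \<in> V g"
  and sum_component: "(\<Sum>g\<in>UNIV. component a g) = a"
  using theI'[OF unique_decomposition[of a]] by (auto simp: component_def)

lemma component_unique: "(\<And>g. c g \<in> V g) \<Longrightarrow> a = (\<Sum>g\<in>UNIV. c g) \<Longrightarrow> component a = c"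
  using unique_decomposition[of a] component_in_V sum_component by metis

lemma component_homogeneous: "x \<in> V h \<Longrightarrow> component x = (\<lambda>g. if g = h then x else 0)"
  by (rule component_unique) auto

text \<open>The degree-zero component \<open>e\<close> of \<open>1\<close> fixes each homogeneous \<open>x\<close>, because the
  components of \<open>1 * x\<close> are the products \<open>e\<^sub>k * x\<close>.\<close>

lemma one_in_V0: "1 \<in> V 0"
proof -
  define e where "e = component 1"
  have e0_mult_homogeneous: "e 0 * x = x" if x: "x \<in> V h" for x h
  proof -
    define c where "c k = e (k - h) * x" for k
    have "(\<Sum>g\<in>UNIV. e g * x) = (\<Sum>k\<in>UNIV. c k)"
      unfolding c_def by (rule sum.reindex_bij_witness[of _ "\<lambda>k. k - h" "\<lambda>g. g + h"]) auto
    then have "x = (\<Sum>k\<in>UNIV. c k)"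
      by (simp add: e_def sum_component flip: sum_distrib_right)
    moreover have "c k \<in> V k" for k
      using V_mult[OF component_in_V[of 1 "k - h"] x] by (simp add: c_def e_def)
    ultimately have "component x = c" by (intro component_unique) auto
    then show ?thesis using component_homogeneous[OF x] by (metis c_def diff_self)
  qed
  have "e 0 = e 0 * (\<Sum>g\<in>UNIV. component 1 g)" by (simp add: sum_component)
  also have "\<dots> = (\<Sum>g\<in>UNIV. e 0 * component 1 g)"
    by (rule sum_distrib_left)
  also have "\<dots> = 1"
    using e0_mult_homogeneous[OF component_in_V] by (simp add: sum_component)
  finally show ?thesis using component_in_V[of 1 0] by (simp add: e_def)
qed

end

locale regularly_graded_algebra = graded_k_algebra scale V
  for scale :: "'k::field \<Rightarrow> 'a::ring_1 \<Rightarrow> 'a" and V :: "'g::{finite,ab_group_add} \<Rightarrow> 'a set" +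
  fixes \<beta> :: "'g \<Rightarrow> 'g \<Rightarrow> 'k"
  assumes nonzero_products: "gs \<noteq> [] \<Longrightarrow> \<exists>as. length as = length gs \<and>
      (\<forall>i<length gs. as ! i \<in> V (gs ! i)) \<and> prod_list as \<noteq> 0"
    and commutation: "x \<in> V g \<Longrightarrow> y \<in> V h \<Longrightarrow> x * y = scale (\<beta> g h) (y * x)"
begin

lemma V_nonzero: "\<exists>x\<in>V g. x \<noteq> 0"
proof -
  obtain as where "length as = 1" "as ! 0 \<in> V g" "prod_list as \<noteq> 0"
    using nonzero_products[of "[g]"] by auto
  then show ?thesis by (cases as) auto
qed

lemma one_neq_zero: "(1::'a) \<noteq> 0"
  using V_nonzero[of 0] by (metis mult_1_left mult_zero_left)

lemma beta_zero_right: "\<beta> g 0 = 1"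
proof -
  obtain x where x: "x \<in> V g" "x \<noteq> 0" using V_nonzero by blast
  have "scale (\<beta> g 0 - 1) x = 0"
    using commutation[OF x(1) one_in_V0] by (simp add: scale_left_diff_distrib)
  then show ?thesis using x(2) by simp
qed

lemma V0_central: "y \<in> V 0 \<Longrightarrow> y * a = a * y"
proof -
  assume y: "y \<in> V 0"
  have "y * a = (\<Sum>g\<in>UNIV. y * component a g)"
    by (subst sum_component[of a, symmetric]) (simp add: sum_distrib_left)
  also have "\<dots> = (\<Sum>g\<in>UNIV. component a g * y)"
    using commutation[OF component_in_V y] by (simp add: beta_zero_right)
  also have "\<dots> = a * y" by (simp add: sum_distrib_right[symmetric] sum_component)
  finally show ?thesis .
qed

text \<open>\<open>w g\<close> plays the role of \<open>X\<^sub>g\<close>: \<open>X\<^sub>g \<mapsto> w g\<close> is a graded embedding of \<open>K\<^sup>\<alpha>G\<close>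
  into the algebra.\<close>

definition twisted_unit_family :: "('g \<Rightarrow> 'a) \<Rightarrow> ('g \<Rightarrow> 'g \<Rightarrow> 'k) \<Rightarrow> bool" where
  "twisted_unit_family w \<alpha> \<longleftrightarrow>
     (\<forall>g. w g \<in> V g \<and> (\<exists>v\<in>V (- g). w g * v = 1 \<and> v * w g = 1)) \<and>
     (\<forall>g h. \<alpha> g h \<noteq> 0 \<and> w g * w h = scale (\<alpha> g h) (w (g + h)))"

context
  fixes w :: "'g \<Rightarrow> 'a" and \<alpha> :: "'g \<Rightarrow> 'g \<Rightarrow> 'k"
  assumes family: "twisted_unit_family w \<alpha>"
begin

lemma family_in_V: "w g \<in> V g"
  and family_mult: "w g * w h = scale (\<alpha> g h) (w (g + h))"
  and family_factor_nonzero: "\<alpha> g h \<noteq> 0"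
  using family by (auto simp: twisted_unit_family_def)

lemma family_inverse: obtains v where "\<And>g. v g \<in> V (- g)" "\<And>g. w g * v g = 1" "\<And>g. v g * w g = 1"
  using family unfolding twisted_unit_family_def by metis

lemma family_nonzero: "w g \<noteq> 0"
  using family_inverse one_neq_zero by (metis mult_zero_left)

lemma family_two_cocycle: "two_cocycle \<alpha>"
  unfolding two_cocycle_def
proof (intro conjI allI)
  fix g h k
  have "scale (\<alpha> g h * \<alpha> (g + h) k) (w (g + h + k)) = (w g * w h) * w k"
    by (simp add: family_mult scale_mult_left[symmetric])
  also have "\<dots> = w g * (w h * w k)" by (rule mult.assoc)
  also have "\<dots> = scale (\<alpha> h k * \<alpha> g (h + k)) (w (g + h + k))"
    by (simp add: family_mult scale_mult_right[symmetric] add.assoc mult.commute)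
  finally show "\<alpha> g h * \<alpha> (g + h) k = \<alpha> h k * \<alpha> g (h + k)"
    using family_nonzero scale_cancel_right by metis
qed (rule family_factor_nonzero)

lemma family_induces: "induces \<alpha> \<beta>"
  unfolding induces_def
proof (intro allI)
  fix g h
  have "scale (\<alpha> g h) (w (g + h)) = scale (\<beta> g h * \<alpha> h g) (w (g + h))"
    using commutation[OF family_in_V family_in_V, of g h] by (simp add: family_mult add.commute)
  then have "\<alpha> g h = \<beta> g h * \<alpha> h g" using family_nonzero by simp
  then show "\<beta> g h = \<alpha> g h / \<alpha> h g" using family_factor_nonzero[of h g] by (simp add: field_simps)
qed

lemma family_zero: "w 0 = scale (\<alpha> 0 0) 1"
proof -
  obtain v where v: "\<And>g. w g * v g = 1"
    using family_inverse by metis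
  have "w 0 = w 0 * w 0 * v 0" using v by (simp add: mult.assoc)
  also have "\<dots> = scale (\<alpha> 0 0) 1" by (simp add: family_mult scale_mult_left[symmetric] v)
  finally show ?thesis .
qed

lemma family_mult_V0: "x \<in> V 0 \<Longrightarrow> w g * x \<in> V g"
  using V_mult[OF family_in_V, of x 0] by simp

definition tensor_map :: "('g \<Rightarrow> 'a) \<Rightarrow> 'a" where
  "tensor_map u = (\<Sum>g\<in>UNIV. w g * u g)"

lemma component_tensor_map:
  "u \<in> tt_carrier (V 0) \<Longrightarrow> component (tensor_map u) = (\<lambda>g. w g * u g)"
  by (intro component_unique) (auto simp: tensor_map_def tt_carrier_def family_mult_V0)

lemma tensor_map_bij: "bij_betw tensor_map (tt_carrier (V 0)) UNIV"
proof -
  obtain v where v: "\<And>g. v g \<in> V (- g)" "\<And>g. w g * v g = 1" "\<And>g. v g * w g = 1"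
    using family_inverse by blast
  have v_cancel: "v g * (w g * x) = x" "w g * (v g * x) = x" for g x
    using v by (simp_all flip: mult.assoc)
  have v_V0: "v g * x \<in> V 0" if "x \<in> V g" for x g
    using V_mult[OF v(1)[of g] that] by simp
  show ?thesis
  proof (rule bij_betw_imageI)
    show "inj_on tensor_map (tt_carrier (V 0))"
    proof (rule inj_onI)
      fix u u' assume "u \<in> tt_carrier (V 0)" "u' \<in> tt_carrier (V 0)" "tensor_map u = tensor_map u'"
      then have "w g * u g = w g * u' g" for g by (metis component_tensor_map)
      then have "v g * (w g * u g) = v g * (w g * u' g)" for g by simp
      then show "u = u'" by (simp add: v_cancel ext)
    qed
    have "a \<in> tensor_map ` tt_carrier (V 0)" for a
    proof
      show "a = tensor_map (\<lambda>g. v g * component a g)"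
        by (simp add: tensor_map_def v_cancel sum_component)
    qed (simp add: tt_carrier_def v_V0 component_in_V)
    then show "tensor_map ` tt_carrier (V 0) = UNIV" by blast
  qed
qed

lemma tensor_map_mult:
  assumes "u \<in> tt_carrier (V 0)" "u' \<in> tt_carrier (V 0)"
  shows "tensor_map (tt_mult scale \<alpha> u u') = tensor_map u * tensor_map u'"
proof -
  have u: "u g \<in> V 0" for g using assms(1) by (simp add: tt_carrier_def)
  have "w g * u g * (w h * u' h) = w (g + h) * scale (\<alpha> g h) (u g * u' h)" for g h
  proof -
    have "w g * u g * (w h * u' h) = (w g * w h) * (u g * u' h)"
      by (simp add: V0_central[OF u] mult.assoc)
    also have "\<dots> = w (g + h) * scale (\<alpha> g h) (u g * u' h)"
      by (simp add: family_mult scale_mult_left[symmetric] scale_mult_right[symmetric])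
    finally show ?thesis .
  qed
  then have "tensor_map u * tensor_map u' =
      (\<Sum>g\<in>UNIV. \<Sum>h\<in>UNIV. w (g + h) * scale (\<alpha> g h) (u g * u' h))"
    by (simp add: tensor_map_def sum_product)
  also have "\<dots> = (\<Sum>k\<in>UNIV. \<Sum>g\<in>UNIV. w (g + (k - g)) * scale (\<alpha> g (k - g)) (u g * u' (k - g)))"
    by (rule sum_sum_as_convolution)
  also have "\<dots> = tensor_map (tt_mult scale \<alpha> u u')"
    by (simp add: tensor_map_def tt_mult_def sum_distrib_left)
  finally show ?thesis by simp
qed

lemma tensor_map_homogeneous:
  "tensor_map ` {u \<in> tt_carrier (V 0). \<forall>h. h \<noteq> g \<longrightarrow> u h = 0} = V g"
proof -
  obtain v where v: "\<And>g. v g \<in> V (- g)" "\<And>g. w g * v g = 1"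
    using family_inverse by metis
  have single: "tensor_map u = w g * u g" if "\<forall>h. h \<noteq> g \<longrightarrow> u h = 0" for u
    unfolding tensor_map_def using that by (subst sum.remove[of _ g]) auto
  show ?thesis
  proof (intro Set.set_eqI iffI)
    fix x assume "x \<in> tensor_map ` {u \<in> tt_carrier (V 0). \<forall>h. h \<noteq> g \<longrightarrow> u h = 0}"
    then show "x \<in> V g"
      using single by (auto simp: tt_carrier_def family_mult_V0)
  next
    fix x assume x: "x \<in> V g"
    let ?u = "\<lambda>h. if h = g then v g * x else 0"
    have "?u \<in> tt_carrier (V 0)" using V_mult[OF v(1)[of g] x] by (simp add: tt_carrier_def)
    moreover have "tensor_map ?u = x" using single[of ?u] v(2) by (simp flip: mult.assoc)
    ultimately show "x \<in> tensor_map ` {u \<in> tt_carrier (V 0). \<forall>h. h \<noteq> g \<longrightarrow> u h = 0}"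
      by (intro rev_image_eqI[of ?u]) auto
  qed
qed

lemma family_graded_iso_tt: "graded_iso_tt scale V \<alpha> (V 0) tensor_map"
  unfolding graded_iso_tt_def
proof (intro conjI ballI allI tensor_map_bij tensor_map_mult tensor_map_homogeneous)
  show "tensor_map (\<lambda>g. u g + u' g) = tensor_map u + tensor_map u'" for u u'
    by (simp add: tensor_map_def distrib_left sum.distrib)
  show "tensor_map (\<lambda>g. scale c (u g)) = scale c (tensor_map u)" for c u
    by (simp add: tensor_map_def scale_mult_right[symmetric] scale_sum_right)
  have "tensor_map (tt_one scale \<alpha>) = w 0 * scale (inverse (\<alpha> 0 0)) 1"
    unfolding tensor_map_def tt_one_def by (subst sum.remove[of _ 0]) auto
  then show "tensor_map (tt_one scale \<alpha>) = 1"
    using family_factor_nonzero[of 0 0]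
    by (simp add: family_zero scale_mult_right[symmetric] scale_one_mult)
qed


definition twisted_map :: "('g \<Rightarrow> 'k) \<Rightarrow> 'a" where
  "twisted_map f = (\<Sum>g\<in>UNIV. scale (f g) (w g))"

lemma twisted_map_single: "\<forall>h. h \<noteq> g \<longrightarrow> f h = 0 \<Longrightarrow> twisted_map f = scale (f g) (w g)"
  unfolding twisted_map_def by (subst sum.remove[of _ g]) auto

lemma twisted_map_mult: "twisted_map (tga_mult \<alpha> f f') = twisted_map f * twisted_map f'"
proof -
  have "scale (f g) (w g) * scale (f' h) (w h) = scale (\<alpha> g h * f g * f' h) (w (g + h))" for g h
    by (simp add: family_mult scale_mult_left[symmetric] scale_mult_right[symmetric] mult_ac)
  then have "twisted_map f * twisted_map f' =
      (\<Sum>g\<in>UNIV. \<Sum>h\<in>UNIV. scale (\<alpha> g h * f g * f' h) (w (g + h)))"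
    by (simp add: twisted_map_def sum_product)
  also have "\<dots> = (\<Sum>k\<in>UNIV. \<Sum>g\<in>UNIV. scale (\<alpha> g (k - g) * f g * f' (k - g)) (w (g + (k - g))))"
    by (rule sum_sum_as_convolution)
  also have "\<dots> = twisted_map (tga_mult \<alpha> f f')"
    by (simp add: twisted_map_def tga_mult_def scale_sum_left)
  finally show ?thesis by simp
qed

context
  assumes V0_scalars: "\<And>x. x \<in> V 0 \<Longrightarrow> \<exists>c. x = scale c 1"
begin

lemma homogeneous_multiple: "x \<in> V g \<Longrightarrow> \<exists>c. x = scale c (w g)"
proof -
  assume x: "x \<in> V g"
  obtain v where v: "\<And>g. v g \<in> V (- g)" "\<And>g. w g * v g = 1"
    using family_inverse by metis
  obtain c where c: "v g * x = scale c 1" using V0_scalars V_mult[OF v(1)[of g] x] by auto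
  have "x = w g * (v g * x)" by (simp add: v(2) flip: mult.assoc)
  also have "\<dots> = scale c (w g)" by (simp add: c scale_mult_right[symmetric])
  finally show ?thesis ..
qed

lemma twisted_map_bij: "bij twisted_map"
proof (rule bijI)
  have "component (twisted_map f) = (\<lambda>g. scale (f g) (w g))" for f
    by (intro component_unique) (auto simp: twisted_map_def V_scale family_in_V)
  then show "inj twisted_map"
  proof (intro injI ext)
    fix f f' g
    assume "twisted_map f = twisted_map f'"
    then have "scale (f g) (w g) = scale (f' g) (w g)"
      using \<open>\<And>f. component (twisted_map f) = _\<close> by metis
    then show "f g = f' g" using family_nonzero by simp
  qed
  show "surj twisted_map"
  proof (rule surjI)
    fix a
    have "component a g = scale (SOME c. component a g = scale c (w g)) (w g)" for g
      using someI_ex[OF homogeneous_multiple[OF component_in_V]] .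
    then have "twisted_map (\<lambda>g. SOME c. component a g = scale c (w g)) = (\<Sum>g\<in>UNIV. component a g)"
      by (simp add: twisted_map_def)
    then show "twisted_map (\<lambda>g. SOME c. component a g = scale c (w g)) = a"
      by (simp add: sum_component)
  qed
qed

lemma twisted_map_homogeneous: "twisted_map ` {f. \<forall>h. h \<noteq> g \<longrightarrow> f h = 0} = V g"
proof (intro Set.set_eqI iffI)
  fix x assume "x \<in> twisted_map ` {f. \<forall>h. h \<noteq> g \<longrightarrow> f h = 0}"
  then show "x \<in> V g" using twisted_map_single by (auto simp: V_scale family_in_V)
next
  fix x assume "x \<in> V g"
  then obtain c where "x = scale c (w g)" using homogeneous_multiple by blast
  then have "x = twisted_map (\<lambda>h. if h = g then c else 0)"
    using twisted_map_single[of g "\<lambda>h. if h = g then c else 0"] by simp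
  then show "x \<in> twisted_map ` {f. \<forall>h. h \<noteq> g \<longrightarrow> f h = 0}" by auto
qed

lemma family_graded_iso_tga: "graded_iso_tga scale V \<alpha> twisted_map"
  unfolding graded_iso_tga_def
proof (intro conjI allI twisted_map_bij twisted_map_mult twisted_map_homogeneous)
  show "twisted_map (\<lambda>g. f g + f' g) = twisted_map f + twisted_map f'" for f f'
    by (simp add: twisted_map_def scale_left_distrib sum.distrib)
  show "twisted_map (\<lambda>g. c * f g) = scale c (twisted_map f)" for c f
    by (simp add: twisted_map_def scale_sum_right)
  show "twisted_map (tga_one \<alpha>) = 1"
    using family_factor_nonzero[of 0 0] twisted_map_single[of 0 "tga_one \<alpha>"]
    by (simp add: tga_one_def family_zero)
qed

end

end

end

section \<open>Graded algebras with a local degree-zero part\<close>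

locale local_regularly_graded_algebra = regularly_graded_algebra scale V \<beta>
  for scale :: "'k::field_char_0 \<Rightarrow> 'a::ring_1 \<Rightarrow> 'a"
    and V :: "'g::{finite,ab_group_add} \<Rightarrow> 'a set" and \<beta> :: "'g \<Rightarrow> 'g \<Rightarrow> 'k" +
  fixes \<psi> :: "'a \<Rightarrow> 'k" and B :: "'a set"
  assumes finite_B: "finite B" and span_B: "span B = UNIV"
    and psi_add: "x \<in> V 0 \<Longrightarrow> y \<in> V 0 \<Longrightarrow> \<psi> (x + y) = \<psi> x + \<psi> y"
    and psi_mult: "x \<in> V 0 \<Longrightarrow> y \<in> V 0 \<Longrightarrow> \<psi> (x * y) = \<psi> x * \<psi> y"
    and psi_scale: "x \<in> V 0 \<Longrightarrow> \<psi> (scale c x) = c * \<psi> x"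
    and psi_one: "\<psi> 1 = 1"
    and psi_kernel: "{x \<in> V 0. \<psi> x = 0} = jacobson (V 0)"
begin

lemma psi_zero [simp]: "\<psi> 0 = 0"
  using psi_add[of 0 0] by simp

lemma psi_scale_one: "\<psi> (scale c 1) = c"
  using psi_scale[OF one_in_V0] psi_one by simp

lemma psi_diff: "x \<in> V 0 \<Longrightarrow> y \<in> V 0 \<Longrightarrow> \<psi> (x - y) = \<psi> x - \<psi> y"
  using psi_add[of "x - y" y] V_diff[of x 0 y] by (simp add: algebra_simps)

lemma psi_sum: "(\<And>i. i \<in> I \<Longrightarrow> f i \<in> V 0) \<Longrightarrow> \<psi> (sum f I) = (\<Sum>i\<in>I. \<psi> (f i))"
  by (induction I rule: infinite_finite_induct) (simp_all add: psi_add V_sum)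

lemma prod_list_in_V0: "set xs \<subseteq> V 0 \<Longrightarrow> prod_list xs \<in> V 0"
  and psi_prod_list: "set xs \<subseteq> V 0 \<Longrightarrow> \<psi> (prod_list xs) = prod_list (map \<psi> xs)"
  by (induction xs) (auto simp: one_in_V0 psi_one V0_mult psi_mult)

lemma power_in_V0: "x \<in> V 0 \<Longrightarrow> x ^ i \<in> V 0"
  and psi_power: "x \<in> V 0 \<Longrightarrow> \<psi> (x ^ i) = \<psi> x ^ i"
  by (induction i) (auto simp: one_in_V0 psi_one V0_mult psi_mult)

lemma in_radical_iff: "x \<in> jacobson (V 0) \<longleftrightarrow> x \<in> V 0 \<and> \<psi> x = 0"
  using psi_kernel by blast

lemma V0_minus_residue: "x \<in> V 0 \<Longrightarrow> x - scale (\<psi> x) 1 \<in> jacobson (V 0)"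
  using psi_kernel one_in_V0 by (auto simp: V_diff V_scale psi_diff psi_scale_one)

lemma left_multiples_left_ideal: "y \<in> V 0 \<Longrightarrow> left_ideal_in (V 0) ((\<lambda>z. z * y) ` V 0)"
  unfolding left_ideal_in_def
proof (intro conjI ballI)
  let ?I = "(\<lambda>z. z * y) ` V 0"
  assume y: "y \<in> V 0"
  show "?I \<subseteq> V 0" using y V0_mult by auto
  show "0 \<in> ?I" using V_zero by (metis image_eqI mult_zero_left)
  show "a + b \<in> ?I" if ab: "a \<in> ?I" "b \<in> ?I" for a b
  proof -
    obtain z z' where "z \<in> V 0" "z' \<in> V 0" "a = z * y" "b = z' * y" using ab by blast
    then show ?thesis by (metis V_add distrib_right image_eqI)
  qed
  show "- a \<in> ?I" if "a \<in> ?I" for a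
  proof -
    obtain z where "z \<in> V 0" "a = z * y" using \<open>a \<in> ?I\<close> by blast
    moreover have "0 - z \<in> V 0" using V_diff[OF V_zero \<open>z \<in> V 0\<close>] .
    ultimately show ?thesis by (metis diff_0 image_eqI minus_mult_left)
  qed
  show "s * a \<in> ?I" if sa: "s \<in> V 0" "a \<in> ?I" for s a
  proof -
    obtain z where "z \<in> V 0" "a = z * y" using sa(2) by blast
    then show ?thesis using sa(1) by (metis V0_mult image_eqI mult.assoc)
  qed
qed

text \<open>If \<open>y\<close> had no inverse, \<open>V 0 * y\<close> would lie in a maximal left ideal; that ideal contains
  the radical, hence \<open>y - (y - \<psi> y \<cdot> 1) = \<psi> y \<cdot> 1\<close>, hence \<open>1\<close>.\<close>

lemma V0_unit:
  assumes y: "y \<in> V 0" and "\<psi> y \<noteq> 0"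
  shows "\<exists>z\<in>V 0. z * y = 1 \<and> y * z = 1"
proof (rule ccontr)
  assume no_inverse: "\<not> ?thesis"
  then have "1 \<notin> (\<lambda>z. z * y) ` V 0" using V0_central[OF y] by auto
  then obtain M where M: "maximal_left_ideal_in (V 0) M" "(\<lambda>z. z * y) ` V 0 \<subseteq> M"
    using maximal_left_ideal_in_extension one_in_V0 left_multiples_left_ideal[OF y] by blast
  then have M_ideal: "left_ideal_in (V 0) M" and "jacobson (V 0) \<subseteq> M"
    by (auto simp: maximal_left_ideal_in_def jacobson_def)
  then have "y - scale (\<psi> y) 1 \<in> M" using V0_minus_residue[OF y] by auto
  moreover have "y \<in> M" using M(2) one_in_V0 by force
  ultimately have "y + - (y - scale (\<psi> y) 1) \<in> M" using M_ideal unfolding left_ideal_in_def by blast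
  then have "scale (inverse (\<psi> y)) 1 * (y + - (y - scale (\<psi> y) 1)) \<in> M"
    using M_ideal V_scale[OF one_in_V0] by (auto simp: left_ideal_in_def)
  then have "1 \<in> M" using assms(2) by (simp add: scale_one_mult)
  then have "V 0 \<subseteq> M" using M_ideal unfolding left_ideal_in_def by (metis mult_1_right subsetI)
  then show False using M(1) by (auto simp: maximal_left_ideal_in_def left_ideal_in_def)
qed

lemma V0_unit_cancel:
  assumes "u \<in> V 0" "\<psi> u \<noteq> 0" "x * u = 0"
  shows "x = 0"
proof -
  obtain z where "u * z = 1" using V0_unit[OF assms(1,2)] by blast
  then have "x = x * u * z" by (simp add: mult.assoc)
  then show ?thesis using assms(3) by simp
qed

lemma psi_prod_list_radical:
  assumes "set xs \<subseteq> jacobson (V 0)"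
  shows "\<psi> (prod_list xs) = (if xs = [] then 1 else 0)"
proof -
  have "set xs \<subseteq> V 0" "set (map \<psi> xs) \<subseteq> {0}"
    using assms unfolding subset_iff in_radical_iff by auto
  then show ?thesis by (cases xs) (auto simp: psi_one psi_mult prod_list_in_V0)
qed

lemma prod_list_radical_in_V0: "set xs \<subseteq> jacobson (V 0) \<Longrightarrow> prod_list xs \<in> V 0"
  using prod_list_in_V0 in_radical_iff by blast

text \<open>For the least \<open>k\<close> with \<open>c k \<noteq> 0\<close>, the relation factors as
  \<open>(r\<^sub>1 \<cdots> r\<^sub>k) * u = 0\<close> with \<open>\<psi> u = c k\<close>, so \<open>u\<close> is a unit and the prefix product vanishes.\<close>

lemma radical_prefix_products_independent:
  assumes rs: "set rs \<subseteq> jacobson (V 0)" and nonzero: "prod_list rs \<noteq> 0"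
    and relation: "(\<Sum>j\<le>length rs. scale (c j) (prod_list (take j rs))) = 0"
    and "j \<le> length rs"
  shows "c j = 0"
proof (rule ccontr)
  assume "c j \<noteq> 0"
  define L where "L = length rs"
  define k where "k = (LEAST j. c j \<noteq> 0)"
  have ck: "c k \<noteq> 0" and "k \<le> j" and below_k: "\<And>i. i < k \<Longrightarrow> c i = 0"
    using \<open>c j \<noteq> 0\<close> LeastI[of "\<lambda>j. c j \<noteq> 0"] Least_le[of "\<lambda>j. c j \<noteq> 0"] not_less_Least
    unfolding k_def by blast+
  then have kL: "k \<le> L" using assms(4) by (simp add: L_def)
  define r where "r i = prod_list (drop k (take i rs))" for i
  have r_radical: "set (drop k (take i rs)) \<subseteq> jacobson (V 0)" for i
    using rs by (auto dest: in_set_takeD in_set_dropD)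
  define u where "u = (\<Sum>i\<in>{k..L}. scale (c i) (r i))"
  have "(\<Sum>i\<le>L. scale (c i) (prod_list (take i rs))) = (\<Sum>i\<in>{k..L}. scale (c i) (prod_list (take i rs)))"
    using below_k by (intro sum.mono_neutral_right) auto
  then have "0 = (\<Sum>i\<in>{k..L}. scale (c i) (prod_list (take i rs)))"
    using relation by (simp add: L_def)
  also have "\<dots> = (\<Sum>i\<in>{k..L}. prod_list (take k rs) * scale (c i) (r i))"
  proof (intro sum.cong refl)
    fix i assume "i \<in> {k..L}"
    then show "scale (c i) (prod_list (take i rs)) = prod_list (take k rs) * scale (c i) (r i)"
      by (simp add: r_def prod_list_take_split[of k i rs] scale_mult_right)
  qed
  also have "\<dots> = prod_list (take k rs) * u"
    by (simp add: u_def sum_distrib_left)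
  finally have "prod_list (take k rs) * u = 0" ..
  moreover have "\<psi> u = c k"
  proof -
    have "\<psi> u = (\<Sum>i\<in>{k..L}. c i * \<psi> (r i))"
      by (simp add: u_def r_def psi_sum psi_scale V_scale prod_list_radical_in_V0[OF r_radical])
    also have "\<dots> = (\<Sum>i\<in>{k..L}. if i = k then c k else 0)"
      by (rule sum.cong) (auto simp: r_def psi_prod_list_radical[OF r_radical] L_def)
    finally show ?thesis using kL by simp
  qed
  moreover have "u \<in> V 0"
    by (simp add: u_def r_def V_sum V_scale prod_list_radical_in_V0[OF r_radical])
  ultimately have "prod_list (take k rs) = 0" using V0_unit_cancel ck by metis
  then show False using nonzero prod_list_take_split[OF kL, of rs] by (simp add: L_def)
qed

lemma radical_product_eq_0:
  assumes "set rs \<subseteq> jacobson (V 0)" "card B \<le> length rs"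
  shows "prod_list rs = 0"
proof (rule ccontr)
  assume "prod_list rs \<noteq> 0"
  obtain c j where relation: "(\<Sum>j\<le>length rs. scale (c j) (prod_list (take j rs))) = 0"
    and "j \<le> length rs" "c j \<noteq> 0"
    using nontrivial_relation_if_card_le[OF finite_B span_B assms(2), of "\<lambda>j. prod_list (take j rs)"]
    by blast
  then show False
    using radical_prefix_products_independent[OF assms(1) \<open>prod_list rs \<noteq> 0\<close> relation] by simp
qed

text \<open>Otherwise regularity for the word \<open>g, -g, g, -g, \<dots>\<close> of length \<open>2 (card B + 1)\<close>
  gives a nonzero product of \<open>card B + 1\<close> radical elements.\<close>

lemma homogeneous_product_outside_radical: "\<exists>a\<in>V g. \<exists>b\<in>V (- g). \<psi> (a * b) \<noteq> 0"
proof (rule ccontr)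
  assume no_pair: "\<not> ?thesis"
  define n where "n = Suc (card B)"
  define gs where "gs = map (\<lambda>i. if even i then g else - g) [0..<2 * n]"
  obtain as where as: "length as = length gs" "\<forall>i<length gs. as ! i \<in> V (gs ! i)"
    "prod_list as \<noteq> 0"
    using nonzero_products[of gs] by (auto simp: gs_def n_def)
  then have "length as = 2 * n" "\<forall>i<2 * n. as ! i \<in> (if even i then V g else V (- g))"
    by (auto simp: gs_def)
  then obtain rs where rs: "length rs = n" "\<forall>r\<in>set rs. \<exists>a\<in>V g. \<exists>b\<in>V (- g). r = a * b"
    "prod_list rs = prod_list as"
    using prod_list_as_pair_products by blast
  have "set rs \<subseteq> jacobson (V 0)"
    using rs(2) no_pair V_mult[of _ g _ "- g"] by (fastforce simp: in_radical_iff)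
  then show False using radical_product_eq_0 rs as(3) by (simp add: n_def)
qed

lemma homogeneous_unit: "\<exists>u\<in>V g. \<exists>v\<in>V (- g). u * v = 1 \<and> v * u = 1"
proof -
  obtain a b where ab: "a \<in> V g" "b \<in> V (- g)" "\<psi> (a * b) \<noteq> 0"
    using homogeneous_product_outside_radical by blast
  have ab_V0: "a * b \<in> V 0" and ba_V0: "b * a \<in> V 0"
    using V_mult[OF ab(1,2)] V_mult[OF ab(2,1)] by simp_all
  have "\<psi> (a * b) = \<beta> g (- g) * \<psi> (b * a)"
    using commutation[OF ab(1,2)] psi_scale[OF ba_V0] by simp
  then have "\<psi> (b * a) \<noteq> 0" using ab(3) by auto
  then obtain z' where z': "z' * (b * a) = 1" using V0_unit[OF ba_V0] by blast
  obtain z where z: "z \<in> V 0" "a * b * z = 1" using V0_unit[OF ab_V0 ab(3)] by blast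
  have "z' * b = z' * (b * a) * (b * z)" using z(2) by (simp add: mult.assoc)
  then have "z' * b = b * z" using z' by simp
  then have "a * (b * z) = 1 \<and> (b * z) * a = 1" using z(2) z' by (metis mult.assoc)
  moreover have "b * z \<in> V (- g)" using V_mult[OF ab(2) z(1)] by simp
  ultimately show ?thesis using ab(1) by blast
qed


lemma radical_power_eq_0: "x \<in> jacobson (V 0) \<Longrightarrow> card B \<le> m \<Longrightarrow> x ^ m = 0"
  using radical_product_eq_0[of "replicate m x"] by (metis prod_list_replicate length_replicate in_set_replicate subsetI)

lemma aeval_in_V0: "x \<in> V 0 \<Longrightarrow> aeval x p \<in> V 0"
  unfolding aeval_def by (intro V_sum V_scale power_in_V0)

lemma psi_aeval: "x \<in> jacobson (V 0) \<Longrightarrow> \<psi> (aeval x p) = coeff p 0"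
proof -
  assume "x \<in> jacobson (V 0)"
  then have x: "x \<in> V 0" "\<psi> x = 0" by (simp_all add: in_radical_iff)
  have "\<psi> (aeval x p) = (\<Sum>i\<le>degree p. coeff p i * \<psi> (x ^ i))"
    unfolding aeval_def using x by (simp add: psi_sum psi_scale V_scale power_in_V0)
  also have "\<dots> = (\<Sum>i\<le>degree p. if i = 0 then coeff p 0 else 0)"
    using x by (intro sum.cong) (auto simp: psi_power)
  finally show ?thesis by simp
qed

subsection \<open>Principal units\<close>

definition principal_units :: "'a set" where
  "principal_units = {x \<in> V 0. \<psi> x = 1}"

definition principal_unit_group :: "'a monoid" where
  "principal_unit_group = \<lparr>carrier = principal_units, mult = (*), one = 1\<rparr>"

lemma principal_unit_group_simps [simp]:
  "carrier principal_unit_group = principal_units"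
  "x \<otimes>\<^bsub>principal_unit_group\<^esub> y = x * y"
  "\<one>\<^bsub>principal_unit_group\<^esub> = 1"
  by (simp_all add: principal_unit_group_def)

lemma principal_units_mult: "x \<in> principal_units \<Longrightarrow> y \<in> principal_units \<Longrightarrow> x * y \<in> principal_units"
  by (auto simp: principal_units_def V0_mult psi_mult)

lemma principal_units_inverse:
  assumes "x \<in> principal_units"
  shows "\<exists>y\<in>principal_units. y * x = 1 \<and> x * y = 1"
proof -
  obtain y where y: "y \<in> V 0" "y * x = 1" "x * y = 1"
    using V0_unit[of x] assms by (auto simp: principal_units_def)
  then have "\<psi> y = 1" using psi_mult[OF y(1), of x] assms by (simp add: principal_units_def psi_one)
  then show ?thesis using y by (auto simp: principal_units_def)
qed

lemma principal_unit_group: "comm_group principal_unit_group"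
proof -
  have "1 \<in> principal_units" by (simp add: principal_units_def one_in_V0 psi_one)
  moreover have "x * y = y * x" if "x \<in> principal_units" for x y
    using that V0_central[of x y] by (simp add: principal_units_def)
  ultimately show ?thesis
    by (intro comm_groupI)
      (auto simp: principal_unit_group_def principal_units_mult mult.assoc dest: principal_units_inverse)
qed

lemma principal_unit_group_pow: "x [^]\<^bsub>principal_unit_group\<^esub> (n::nat) = x ^ n"
  by (induction n) (simp_all add: power_commutes)

lemma principal_units_torsion_free:
  assumes r: "r \<in> principal_units" and "r ^ n = 1" "n \<ge> 1"
  shows "r = 1"
proof -
  have r_V0: "r \<in> V 0" using r by (simp add: principal_units_def)
  have "(r - 1) * (\<Sum>i<n. r ^ i) = 0"
    using geometric_sum_telescope[of r n] assms(2) by simp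
  moreover have "\<psi> (\<Sum>i<n. r ^ i) = of_nat n"
    using r by (simp add: psi_sum power_in_V0 psi_power principal_units_def)
  then have "\<psi> (\<Sum>i<n. r ^ i) \<noteq> 0" using assms(3) by simp
  moreover have "(\<Sum>i<n. r ^ i) \<in> V 0" using r_V0 by (simp add: V_sum power_in_V0)
  ultimately have "r - 1 = 0" using V0_unit_cancel by blast
  then show ?thesis by simp
qed

lemma card_B_pos: "0 < card B"
proof (rule ccontr)
  assume "\<not> 0 < card B"
  then have "B = {}" using finite_B by simp
  then have "(1::'a) = 0" using span_B span_empty by (metis UNIV_I singletonD)
  then show False using one_neq_zero by simp
qed

text \<open>The root is the binomial series of \<open>(1 + x) ^ (1 / n)\<close>, truncated where the nilpotent
  \<open>x = y - 1\<close> kills all further terms.\<close>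

lemma principal_units_root:
  assumes y: "y \<in> principal_units" and n: "n \<ge> 1"
  shows "\<exists>r\<in>principal_units. r ^ n = y"
proof -
  define x where "x = y - 1"
  have x: "x \<in> jacobson (V 0)"
    using y one_in_V0 by (simp add: x_def in_radical_iff principal_units_def V_diff psi_diff psi_one)
  define F :: "'k fps" where "F = fps_binomial (inverse (of_nat n))"
  have F_power: "F ^ n = 1 + fps_X"
    using n by (simp add: F_def fps_binomial_power fps_binomial_1)
  define r where "r = aeval x (truncate_fps (card B) F)"
  have "r ^ n = aeval x (truncate_fps (card B) F ^ n)" by (simp add: r_def aeval_power)
  also have "\<dots> = aeval x [:1, 1:]"
  proof (rule aeval_nilpotent_cong)
    show "x ^ i = 0" if "card B \<le> i" for i using radical_power_eq_0[OF x that] .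
    show "coeff (truncate_fps (card B) F ^ n) i = coeff [:1, 1:] i" if "i < card B" for i
      using that by (simp add: coeff_truncate_fps_power F_power coeff_pCons split: nat.split)
  qed
  also have "\<dots> = y" by (simp add: aeval_pCons x_def)
  finally have "r ^ n = y" .
  moreover have "r \<in> principal_units"
    using x psi_aeval[OF x] aeval_in_V0 card_B_pos
    by (auto simp: r_def principal_units_def in_radical_iff F_def coeff_truncate_fps)
  ultimately show ?thesis by blast
qed

subsection \<open>Trivialising the cocycle of homogeneous units\<close>

context
  fixes u v :: "'g \<Rightarrow> 'a"
  assumes u_in_V: "\<And>g. u g \<in> V g" and v_in_V: "\<And>g. v g \<in> V (- g)"
    and u_v: "\<And>g. u g * v g = 1" and v_u: "\<And>g. v g * u g = 1"
begin

definition unit_cocycle :: "'g \<Rightarrow> 'g \<Rightarrow> 'a" where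
  "unit_cocycle g h = v (g + h) * u g * u h"

lemma unit_cocycle_in_V0: "unit_cocycle g h \<in> V 0"
  using V_mult[OF V_mult[OF v_in_V u_in_V] u_in_V, of "g + h" g h] by (simp add: unit_cocycle_def)

lemma mult_eq_unit_cocycle: "u g * u h = u (g + h) * unit_cocycle g h"
  by (simp add: unit_cocycle_def u_v flip: mult.assoc)

lemma psi_unit_cocycle_nonzero: "\<psi> (unit_cocycle g h) \<noteq> 0"
proof -
  have "v h * v g * u (g + h) \<in> V 0"
    using V_mult[OF V_mult[OF v_in_V v_in_V] u_in_V, of h g "g + h"] by (simp add: algebra_simps)
  moreover have "unit_cocycle g h * (v h * v g * u (g + h)) = v (g + h) * (u g * (u h * v h) * v g) * u (g + h)"
    by (simp add: unit_cocycle_def mult.assoc)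
  then have "unit_cocycle g h * (v h * v g * u (g + h)) = 1"
    by (simp add: u_v v_u)
  ultimately have "\<psi> (unit_cocycle g h) * \<psi> (v h * v g * u (g + h)) = 1"
    using psi_mult[OF unit_cocycle_in_V0] psi_one by metis
  then show ?thesis by auto
qed

lemma unit_cocycle_identity:
  "unit_cocycle (g + h) k * unit_cocycle g h = unit_cocycle g (h + k) * unit_cocycle h k"
proof -
  let ?c = unit_cocycle
  have "(u g * u h) * u k = u (g + h) * (?c g h * u k)"
    by (simp add: mult_eq_unit_cocycle mult.assoc)
  also have "\<dots> = (u (g + h) * u k) * ?c g h"
    by (simp add: V0_central[OF unit_cocycle_in_V0] mult.assoc)
  also have "\<dots> = u (g + h + k) * (?c (g + h) k * ?c g h)"
    by (simp add: mult_eq_unit_cocycle mult.assoc)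
  finally have left: "(u g * u h) * u k = u (g + h + k) * (?c (g + h) k * ?c g h)" .
  have "u g * (u h * u k) = (u g * u (h + k)) * ?c h k"
    by (simp only: mult_eq_unit_cocycle[of h k] mult.assoc)
  also have "\<dots> = u (g + h + k) * (?c g (h + k) * ?c h k)"
    by (simp only: mult_eq_unit_cocycle[of g "h + k"] mult.assoc add.assoc)
  finally have "u (g + h + k) * (?c (g + h) k * ?c g h) = u (g + h + k) * (?c g (h + k) * ?c h k)"
    using left by (simp add: mult.assoc)
  then have "v (g + h + k) * (u (g + h + k) * (?c (g + h) k * ?c g h)) =
      v (g + h + k) * (u (g + h + k) * (?c g (h + k) * ?c h k))" by simp
  then show ?thesis by (simp add: v_u flip: mult.assoc)
qed

definition normalized_cocycle :: "'g \<Rightarrow> 'g \<Rightarrow> 'a" where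
  "normalized_cocycle g h = scale (inverse (\<psi> (unit_cocycle g h))) (unit_cocycle g h)"

lemma normalized_cocycle_principal: "normalized_cocycle g h \<in> principal_units"
  using psi_unit_cocycle_nonzero[of g h]
  by (simp add: principal_units_def normalized_cocycle_def V_scale unit_cocycle_in_V0 psi_scale)

lemma unit_cocycle_eq_scale: "unit_cocycle g h = scale (\<psi> (unit_cocycle g h)) (normalized_cocycle g h)"
  using psi_unit_cocycle_nonzero[of g h] by (simp add: normalized_cocycle_def)

lemma normalized_cocycle_identity:
  "normalized_cocycle g h * normalized_cocycle (g + h) k = normalized_cocycle h k * normalized_cocycle g (h + k)"
proof -
  let ?c = unit_cocycle and ?d = normalized_cocycle
  have psi_identity: "\<psi> (?c (g + h) k) * \<psi> (?c g h) = \<psi> (?c g (h + k)) * \<psi> (?c h k)"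
    using unit_cocycle_identity[of g h k] psi_mult[OF unit_cocycle_in_V0 unit_cocycle_in_V0] by metis
  have "?d g h * ?d (g + h) k = scale (inverse (\<psi> (?c (g + h) k) * \<psi> (?c g h))) (?c (g + h) k * ?c g h)"
    by (simp add: normalized_cocycle_def V0_central[OF unit_cocycle_in_V0, of g h]
        scale_mult_left[symmetric] scale_mult_right[symmetric] mult.commute)
  also have "\<dots> = scale (inverse (\<psi> (?c g (h + k)) * \<psi> (?c h k))) (?c g (h + k) * ?c h k)"
    by (simp only: psi_identity unit_cocycle_identity)
  also have "\<dots> = ?d h k * ?d g (h + k)"
    by (simp add: normalized_cocycle_def V0_central[OF unit_cocycle_in_V0, of h k]
        scale_mult_left[symmetric] scale_mult_right[symmetric] mult.commute)
  finally show ?thesis .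
qed

lemma normalized_cocycle_coboundary:
  "\<exists>t. (\<forall>g. t g \<in> principal_units) \<and> (\<forall>g h. normalized_cocycle g h * t g * t h = t (g + h))"
proof -
  interpret H: comm_group principal_unit_group by (rule principal_unit_group)
  have "card (UNIV :: 'g set) \<ge> 1" by (simp add: Suc_le_eq finite_UNIV_card_ge_0)
  then have "\<exists>t. (\<forall>g. t g \<in> carrier principal_unit_group) \<and>
      (\<forall>g h. normalized_cocycle g h \<otimes>\<^bsub>principal_unit_group\<^esub> t g \<otimes>\<^bsub>principal_unit_group\<^esub> t h = t (g + h))"
    using principal_units_root principal_units_torsion_free
    by (intro H.cocycle_coboundary_if_uniquely_divisible)
      (simp_all add: normalized_cocycle_principal normalized_cocycle_identity principal_unit_group_pow)
  then show ?thesis by simp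
qed

lemma twisted_unit_family_from_units: "\<exists>w. twisted_unit_family w (\<lambda>g h. \<psi> (unit_cocycle g h))"
proof -
  let ?c = unit_cocycle and ?d = normalized_cocycle and ?P = principal_units
  obtain t where t: "\<And>g. t g \<in> ?P" "\<And>g h. ?d g h * t g * t h = t (g + h)"
    using normalized_cocycle_coboundary by blast
  obtain s where s: "\<And>g. s g \<in> ?P" "\<And>g. s g * t g = 1" "\<And>g. t g * s g = 1"
    using principal_units_inverse[OF t(1)] by metis
  have P_V0: "x \<in> ?P \<Longrightarrow> x \<in> V 0" for x by (simp add: principal_units_def)
  define w where "w g = u g * t g" for g
  have "w g * w h = scale (\<psi> (?c g h)) (w (g + h))" for g h
  proof -
    have "w g * w h = u g * (t g * u h) * t h" by (simp only: w_def mult.assoc)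
    also have "\<dots> = (u g * u h) * (t g * t h)"
      by (simp only: V0_central[OF P_V0[OF t(1)], of g "u h"] mult.assoc)
    also have "\<dots> = u (g + h) * (scale (\<psi> (?c g h)) (?d g h) * (t g * t h))"
      by (simp only: mult_eq_unit_cocycle flip: unit_cocycle_eq_scale) (simp only: mult.assoc)
    also have "\<dots> = scale (\<psi> (?c g h)) (u (g + h) * (?d g h * t g * t h))"
      by (simp only: scale_mult_left[symmetric] scale_mult_right[symmetric] mult.assoc)
    finally show ?thesis by (simp only: t(2) w_def)
  qed
  moreover have "w g \<in> V g \<and> (\<exists>v'\<in>V (- g). w g * v' = 1 \<and> v' * w g = 1)" for g
  proof (intro conjI bexI)
    show "w g \<in> V g" using V_mult[OF u_in_V P_V0[OF t(1)], of g g] by (simp add: w_def)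
    show "s g * v g \<in> V (- g)" using V_mult[OF P_V0[OF s(1)] v_in_V, of g g] by simp
    have "w g * (s g * v g) = u g * (t g * s g) * v g" by (simp only: w_def mult.assoc)
    then show "w g * (s g * v g) = 1" by (simp add: s u_v)
    have "s g * v g * w g = s g * (v g * u g) * t g" by (simp only: w_def mult.assoc)
    then show "s g * v g * w g = 1" by (simp add: s v_u)
  qed
  ultimately show ?thesis
    using psi_unit_cocycle_nonzero by (auto simp: twisted_unit_family_def)
qed

end

lemma twisted_unit_family_exists: "\<exists>w \<alpha>. twisted_unit_family w \<alpha>"
proof -
  obtain u v where "\<And>g. u g \<in> V g" "\<And>g. v g \<in> V (- g)" "\<And>g. u g * v g = 1" "\<And>g. v g * u g = 1"
    using homogeneous_unit by metis
  then show ?thesis using twisted_unit_family_from_units by blast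
qed

lemma V0_scalars_if_radical_trivial:
  assumes "jacobson (V 0) = {0}" "x \<in> V 0"
  shows "\<exists>c. x = scale c 1"
  using V0_minus_residue[OF assms(2)] assms(1) by auto

lemma V0_eq_scalars_plus_radical: "{scale c 1 + j | c j. j \<in> jacobson (V 0)} = V 0"
proof
  show "{scale c 1 + j | c j. j \<in> jacobson (V 0)} \<subseteq> V 0"
    using one_in_V0 by (auto simp: in_radical_iff intro!: V_add V_scale)
  show "V 0 \<subseteq> {scale c 1 + j | c j. j \<in> jacobson (V 0)}"
    using V0_minus_residue by force
qed

lemma V0_subalgebra: "subalgebra scale (V 0)"
  unfolding subalgebra_def using subspace_V one_in_V0 V0_mult by blast

lemma V0_commutative: "commutative_set (V 0)"
  unfolding commutative_set_def using V0_central by blast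

end

lemma regularly_graded_algebraI:
  assumes "regular_grading scale V \<beta>"
  shows "regularly_graded_algebra scale V \<beta>"
proof -
  obtain alg: "is_algebra scale" and subspaces: "\<forall>g. module.subspace scale (V g)"
    and decomposition: "\<forall>a. \<exists>!c. (\<forall>g. c g \<in> V g) \<and> a = (\<Sum>g\<in>UNIV. c g)"
    and mult: "\<forall>g h. \<forall>x\<in>V g. \<forall>y\<in>V h. x * y \<in> V (g + h)"
    and products: "\<forall>gs. gs \<noteq> [] \<longrightarrow> (\<exists>as. length as = length gs \<and>
         (\<forall>i<length gs. as ! i \<in> V (gs ! i)) \<and> prod_list as \<noteq> 0)"
    and commutation: "\<forall>g h. \<forall>x\<in>V g. \<forall>y\<in>V h. x * y = scale (\<beta> g h) (y * x)"
    using assms unfolding regular_grading_def graded_algebra_def by (elim conjE) (rule that; assumption)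
  show ?thesis
  proof (intro regularly_graded_algebra.intro graded_k_algebra.intro k_algebra.intro
      regularly_graded_algebra_axioms.intro graded_k_algebra_axioms.intro k_algebra_axioms.intro)
    show "vector_space scale"
      and "scale c (x * y) = scale c x * y" "scale c (x * y) = x * scale c y" for c x y
      using alg unfolding is_algebra_def by blast+
    show "module.subspace scale (V g)" for g using subspaces by blast
    show "\<exists>!c. (\<forall>g. c g \<in> V g) \<and> a = (\<Sum>g\<in>UNIV. c g)" for a
      using decomposition by (rule spec)
    show "x * y \<in> V (g + h)" if "x \<in> V g" "y \<in> V h" for x y g h using mult that by blast
    show "\<exists>as. length as = length gs \<and> (\<forall>i<length gs. as ! i \<in> V (gs ! i)) \<and> prod_list as \<noteq> 0"
      if "gs \<noteq> []" for gs using products that by blast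
    show "x * y = scale (\<beta> g h) (y * x)" if "x \<in> V g" "y \<in> V h" for x y g h
      using commutation that by blast
  qed
qed

lemma local_regularly_graded_algebra_exists:
  fixes scale :: "'k::field_char_0 \<Rightarrow> 'a::ring_1 \<Rightarrow> 'a" and V :: "'g::{finite,ab_group_add} \<Rightarrow> 'a set"
  assumes "regular_grading scale V \<beta>" "fin_dim_algebra scale" "local_alg scale (V 0)"
  shows "\<exists>\<psi> B. local_regularly_graded_algebra scale V \<beta> \<psi> B"
proof -
  obtain B where B: "finite B" "module.span scale B = UNIV"
    using assms(2) unfolding fin_dim_algebra_def by blast
  obtain \<psi> where \<psi>: "\<forall>x\<in>V 0. \<forall>y\<in>V 0. \<psi> (x + y) = \<psi> x + \<psi> y \<and> \<psi> (x * y) = \<psi> x * \<psi> y"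
    "\<forall>c. \<forall>x\<in>V 0. \<psi> (scale c x) = c * \<psi> x" "\<psi> 1 = 1" "{x \<in> V 0. \<psi> x = 0} = jacobson (V 0)"
    using assms(3) unfolding local_alg_def by blast
  have "local_regularly_graded_algebra scale V \<beta> \<psi> B"
    using regularly_graded_algebraI[OF assms(1)] B \<psi>
    by (intro local_regularly_graded_algebra.intro local_regularly_graded_algebra_axioms.intro) blast+
  then show ?thesis by blast
qed

theorem theorem4p16:
  fixes scale :: "'k::field_char_0 \<Rightarrow> 'a::ring_1 \<Rightarrow> 'a"
    and V :: "'g::{finite,ab_group_add} \<Rightarrow> 'a set"
    and \<beta> :: "'g \<Rightarrow> 'g \<Rightarrow> 'k"
  assumes "alg_closed TYPE('k)"
    and "fin_dim_algebra scale"
    and "regular_grading scale V \<beta>"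
    and "minimal_decomposition \<beta>"
    and "local_alg scale (V 0)"
  shows "\<exists>\<alpha>. two_cocycle \<alpha> \<and> induces \<alpha> \<beta> \<and>
           (jacobson (V 0) \<noteq> {0} \<longrightarrow>
              (let U = {scale c 1 + j | c j. j \<in> jacobson (V 0)} in
                 subalgebra scale U \<and> commutative_set U \<and> local_alg scale U \<and>
                 (\<exists>\<phi>. graded_iso_tt scale V \<alpha> U \<phi>))) \<and>
           (jacobson (V 0) = {0} \<longrightarrow> (\<exists>\<phi>. graded_iso_tga scale V \<alpha> \<phi>))"
proof -
  obtain \<psi> B where "local_regularly_graded_algebra scale V \<beta> \<psi> B"
    using local_regularly_graded_algebra_exists assms(2,3,5) by blast
  then interpret local_regularly_graded_algebra scale V \<beta> \<psi> B .
  obtain w \<alpha> where family: "twisted_unit_family w \<alpha>"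
    using twisted_unit_family_exists by blast
  show ?thesis
    unfolding Let_def V0_eq_scalars_plus_radical
    using family_two_cocycle[OF family] family_induces[OF family] family_graded_iso_tt[OF family]
      family_graded_iso_tga[OF family V0_scalars_if_radical_trivial] V0_subalgebra V0_commutative assms(5)
    by blast
qed

end
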